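(* Let $\sigma=(\beta_1,\dots,\beta_M)$ be an arbitrary strategy, $\{\mathcal{I}_N\}$ an arbitrary sequence of instances of the non-binary voting game, and $\Sigma_N$ the symmetric profile in $\mathcal{I}_N$ in which every agent plays $\sigma$. Let $f_{w\mathbf{A}}=\sum_{m=1}^MP_{mw}\beta_m-\mu$, $f_{w\mathbf{R}}=\sum_{m=1}^MP_{mw}(1-\beta_m)-(1-\mu)$ and $f=\min(\min_{w\in\mathcal{H}}f_{w\mathbf{A}},\min_{w\in\mathcal{L}}f_{w\mathbf{R}})$. (i) If $f>0$, there exists a constant $N_0>0$ such that $A(\Sigma_N)\ge1-2\exp(-\tfrac12f^2N)$ for all $N>N_0$. (ii) If $f\le0$, there exist constants $N_0>0$ and $\eta'>0$ such that $A(\Sigma_N)\le1-\eta'$ for all $N>N_0$.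
   Context: Non-binary voting game. $N$ agents each vote for $\mathbf{A}$ or $\mathbf{R}$. World state $W\in\{1,\dots,\mathcal{W}\}$ (unobserved), prior $P_w>0$. Conditional on $W$, each agent independently receives a signal $S_n\in\{1,\dots,M\}$ with $P_{mw}=\Pr[S_n=m\mid W=w]$, satisfying stochastic dominance. Threshold $\mu\in(0,1)$: $\mathbf{A}$ wins iff at least $\mu N$ agents vote $\mathbf{A}$, else $\mathbf{R}$. Agents have utilities with $v_n(w,\mathbf{A})$ strictly increasing and $v_n(w,\mathbf{R})$ strictly decreasing in $w$. Constants $\alpha^{\mathbf{A}}_w$, $\alpha^{\mathbf{R}}_w=1-\alpha^{\mathbf{A}}_w$ independent of $N$: exactly $\lfloor\alpha^{\mathbf{R}}_wN\rfloor$ agents prefer $\mathbf{R}$ in state $w$; $\alpha^{\mathbf{A}}_w\ne\mu$. Informed majority decision in $w$: $\mathbf{A}$ if $\alpha^{\mathbf{A}}_w>\mu$, else $\mathbf{R}$. $\mathcal{L}=\{w:\alpha^{\mathbf{A}}_w<\mu\}$, $\mathcal{H}=\{w:\alpha^{\mathbf{A}}_w>\mu\}$, both nonempty. A sequence of instances: $\mathcal{I}_N$ has $N$ agents, all share $\mu$, $(P_w)$, $(P_{mw})$, $(\alpha^{\mathbf{A}}_w)$. Strategy $(\beta_1,\dots,\beta_M)$: $\beta_m$ = probability of voting $\mathbf{A}$ on signal $m$. $\lambda^{\mathbf{X}}_w(\Sigma)$: ex-ante probability that $\mathbf{X}$ wins in state $w$. Fidelity $A(\Sigma)=\sum_{w\in\mathcal{L}}P_w\lambda^{\mathbf{R}}_w(\Sigma)+\sum_{w\in\mathcal{H}}P_w\lambda^{\mathbf{A}}_w(\Sigma)$.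 *)

theory Defs
  imports "HOL-Probability.Probability"
begin

text \<open>States are 1..W, signals are 1..M. Pw w is the prior of state w,
  P m w = Pr[S = m | W = w], beta m = probability of voting A on signal m.\<close>

definition voteA_prob :: "(nat \<Rightarrow> nat \<Rightarrow> real) \<Rightarrow> nat \<Rightarrow> (nat \<Rightarrow> real) \<Rightarrow> nat \<Rightarrow> real" where
  "voteA_prob P M beta w = (\<Sum>m = 1..M. P m w * beta m)"

text \<open>In the symmetric profile with N agents, conditional on state w the votes are
  i.i.d., so the number of A votes is Binomial(N, voteA_prob).
  lambdaA / lambdaR: probability that A / R wins in state w.\<close>
definition lambdaA :: "(nat \<Rightarrow> nat \<Rightarrow> real) \<Rightarrow> nat \<Rightarrow> (nat \<Rightarrow> real) \<Rightarrow> real \<Rightarrow> nat \<Rightarrow> nat \<Rightarrow> real" where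
  "lambdaA P M beta mu N w =
     measure_pmf.prob (binomial_pmf N (voteA_prob P M beta w)) {k. mu * real N \<le> real k}"

definition lambdaR :: "(nat \<Rightarrow> nat \<Rightarrow> real) \<Rightarrow> nat \<Rightarrow> (nat \<Rightarrow> real) \<Rightarrow> real \<Rightarrow> nat \<Rightarrow> nat \<Rightarrow> real" where
  "lambdaR P M beta mu N w =
     measure_pmf.prob (binomial_pmf N (voteA_prob P M beta w)) {k. real k < mu * real N}"

definition Lset :: "nat \<Rightarrow> (nat \<Rightarrow> real) \<Rightarrow> real \<Rightarrow> nat set" where
  "Lset W alphaA mu = {w \<in> {1..W}. alphaA w < mu}"

definition Hset :: "nat \<Rightarrow> (nat \<Rightarrow> real) \<Rightarrow> real \<Rightarrow> nat set" where
  "Hset W alphaA mu = {w \<in> {1..W}. alphaA w > mu}"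

definition fidelity ::
  "nat \<Rightarrow> (nat \<Rightarrow> real) \<Rightarrow> (nat \<Rightarrow> nat \<Rightarrow> real) \<Rightarrow> nat \<Rightarrow> (nat \<Rightarrow> real) \<Rightarrow> real
     \<Rightarrow> (nat \<Rightarrow> real) \<Rightarrow> nat \<Rightarrow> real" where
  "fidelity W Pw P M beta mu alphaA N =
     (\<Sum>w \<in> Lset W alphaA mu. Pw w * lambdaR P M beta mu N w)
   + (\<Sum>w \<in> Hset W alphaA mu. Pw w * lambdaA P M beta mu N w)"

definition fA :: "(nat \<Rightarrow> nat \<Rightarrow> real) \<Rightarrow> nat \<Rightarrow> (nat \<Rightarrow> real) \<Rightarrow> real \<Rightarrow> nat \<Rightarrow> real" where
  "fA P M beta mu w = (\<Sum>m = 1..M. P m w * beta m) - mu"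

definition fR :: "(nat \<Rightarrow> nat \<Rightarrow> real) \<Rightarrow> nat \<Rightarrow> (nat \<Rightarrow> real) \<Rightarrow> real \<Rightarrow> nat \<Rightarrow> real" where
  "fR P M beta mu w = (\<Sum>m = 1..M. P m w * (1 - beta m)) - (1 - mu)"

definition fmin ::
  "nat \<Rightarrow> (nat \<Rightarrow> nat \<Rightarrow> real) \<Rightarrow> nat \<Rightarrow> (nat \<Rightarrow> real) \<Rightarrow> real \<Rightarrow> (nat \<Rightarrow> real) \<Rightarrow> real" where
  "fmin W P M beta mu alphaA =
     min (Min (fA P M beta mu ` Hset W alphaA mu)) (Min (fR P M beta mu ` Lset W alphaA mu))"

definition stoch_dom :: "nat \<Rightarrow> nat \<Rightarrow> (nat \<Rightarrow> nat \<Rightarrow> real) \<Rightarrow> bool" where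
  "stoch_dom W M P \<longleftrightarrow>
     (\<forall>w w' m. 1 \<le> w \<longrightarrow> w \<le> w' \<longrightarrow> w' \<le> W \<longrightarrow> 1 \<le> m \<longrightarrow> m \<le> M \<longrightarrow>
        (\<Sum>j = m..M. P j w) \<le> (\<Sum>j = m..M. P j w'))"

end

theory Submission
  imports Defs
begin

text \<open>Conditional on state \<open>w\<close>, the number of \<open>A\<close>-votes is Binomial\<open>(N, p\<^sub>w)\<close>,
  and \<open>f\<close> is the smallest margin by which some \<open>p\<^sub>w\<close> lies on the side of \<open>\<mu>\<close>
  that makes the informed majority decision win. If \<open>f > 0\<close>, Hoeffding's inequality
  bounds every wrong-outcome probability by \<open>exp(-2Nf\<^sup>2)\<close>, which is even better than
  claimed. If \<open>f \<le> 0\<close>, some state \<open>w\<^sub>0\<close> has \<open>p\<^sub>w\<^sub>0\<close> on the wrong side of \<open>\<mu>\<close>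
  or equal to it; a binomial variable falls strictly below (above) its mean with
  probability at least 1/30 once its variance is at least 1, which follows from its
  second and fourth central moments, so the fidelity loses at least \<open>P\<^sub>w\<^sub>0/30\<close>.\<close>

section \<open>Central moments of the binomial distribution\<close>

lemma expectation_binomial_pmf_Suc:
  fixes h :: "nat \<Rightarrow> real"
  assumes p: "p \<in> {0..1}"
  shows "measure_pmf.expectation (binomial_pmf (Suc n) p) h =
    p * measure_pmf.expectation (binomial_pmf n p) (\<lambda>k. h (Suc k))
    + (1 - p) * measure_pmf.expectation (binomial_pmf n p) h"
proof -
  have "measure_pmf.expectation (binomial_pmf (Suc n) p) h =
     (\<Sum>b\<in>UNIV. pmf (bernoulli_pmf p) b *\<^sub>R measure_pmf.expectation
        (binomial_pmf n p \<bind> (\<lambda>k. return_pmf ((if b then 1 else 0) + k))) h)"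
    unfolding binomial_pmf_Suc[OF p]
    by (rule pmf_expectation_bind) (use p in \<open>auto intro!: finite_UN_I\<close>)
  also have "\<dots> = p * measure_pmf.expectation (binomial_pmf n p) (\<lambda>k. h (Suc k))
    + (1 - p) * measure_pmf.expectation (binomial_pmf n p) h"
    using p by (simp add: UNIV_bool map_pmf_def[symmetric])
  finally show ?thesis .
qed

lemma expectation_binomial_pmf_Suc_centered:
  fixes p :: real and g h :: "real \<Rightarrow> real"
  assumes p: "p \<in> {0..1}" and gh: "\<And>x. p * g (x + (1 - p)) + (1 - p) * g (x - p) = h x"
  shows "measure_pmf.expectation (binomial_pmf (Suc n) p) (\<lambda>k. g (real k - real (Suc n) * p)) =
         measure_pmf.expectation (binomial_pmf n p) (\<lambda>k. h (real k - n * p))"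
proof -
  let ?E = "measure_pmf.expectation (binomial_pmf n p)"
  have shift: "real (Suc k) - real (Suc n) * p = (real k - n * p) + (1 - p)"
    and stay: "real k - real (Suc n) * p = (real k - n * p) - p" for k
    by (simp_all add: algebra_simps)
  have "measure_pmf.expectation (binomial_pmf (Suc n) p) (\<lambda>k. g (real k - real (Suc n) * p))
      = p * ?E (\<lambda>k. g (real (Suc k) - real (Suc n) * p))
        + (1 - p) * ?E (\<lambda>k. g (real k - real (Suc n) * p))"
    by (rule expectation_binomial_pmf_Suc[OF p])
  also have "\<dots> = p * ?E (\<lambda>k. g ((real k - n * p) + (1 - p)))
                    + (1 - p) * ?E (\<lambda>k. g ((real k - n * p) - p))"
    unfolding shift by (simp only: stay)
  also have "\<dots> = ?E (\<lambda>k. p * g ((real k - n * p) + (1 - p)) + (1 - p) * g ((real k - n * p) - p))"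
    using p by simp
  finally show ?thesis
    by (simp only: gh)
qed

lemma binomial_centered_mean:
  fixes p :: real
  assumes p: "p \<in> {0..1}"
  shows "measure_pmf.expectation (binomial_pmf n p) (\<lambda>k. real k - n * p) = 0"
proof (induction n)
  case 0
  show ?case using p by (simp add: binomial_pmf_0)
next
  case (Suc n)
  have "p * (x + (1 - p)) + (1 - p) * (x - p) = x" for x :: real
    by (simp add: algebra_simps)
  then show ?case
    using expectation_binomial_pmf_Suc_centered[OF p, of "\<lambda>x. x" "\<lambda>x. x" n] Suc by simp
qed

lemma binomial_centered_second_moment:
  fixes p :: real
  assumes p: "p \<in> {0..1}"
  shows "measure_pmf.expectation (binomial_pmf n p) (\<lambda>k. (real k - n * p)^2) = n * (p * (1 - p))"
proof (induction n)
  case 0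
  show ?case using p by (simp add: binomial_pmf_0)
next
  case (Suc n)
  have "p * (x + (1 - p))^2 + (1 - p) * (x - p)^2 = x^2 + p * (1 - p)" for x :: real
    by (simp add: power2_eq_square algebra_simps)
  then have "measure_pmf.expectation (binomial_pmf (Suc n) p) (\<lambda>k. (real k - real (Suc n) * p)^2)
      = measure_pmf.expectation (binomial_pmf n p) (\<lambda>k. (real k - n * p)^2 + p * (1 - p))"
    by (rule expectation_binomial_pmf_Suc_centered[OF p])
  also have "\<dots> = real (Suc n) * (p * (1 - p))"
    using p Suc by (simp add: algebra_simps)
  finally show ?case .
qed

lemma binomial_centered_fourth_moment:
  fixes p :: real
  assumes p: "p \<in> {0..1}"
  defines "q \<equiv> p * (1 - p)"
  shows "measure_pmf.expectation (binomial_pmf n p) (\<lambda>k. (real k - n * p)^4)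
           = n * q * (1 - 6 * q) + 3 * (real n)^2 * q^2"
proof (induction n)
  case 0
  show ?case using p by (simp add: binomial_pmf_0)
next
  case (Suc n)
  have "p * (x + (1 - p))^4 + (1 - p) * (x - p)^4
          = x^4 + 6 * q * x^2 + 4 * q * (1 - 2 * p) * x + q * (1 - 3 * q)" for x :: real
    unfolding q_def by (simp add: power2_eq_square power4_eq_xxxx algebra_simps)
  then have "measure_pmf.expectation (binomial_pmf (Suc n) p) (\<lambda>k. (real k - real (Suc n) * p)^4)
      = measure_pmf.expectation (binomial_pmf n p) (\<lambda>k. (real k - n * p)^4
          + 6 * q * (real k - n * p)^2 + 4 * q * (1 - 2 * p) * (real k - n * p) + q * (1 - 3 * q))"
    by (rule expectation_binomial_pmf_Suc_centered[OF p])
  also have "\<dots> = (n * q * (1 - 6 * q) + 3 * (real n)^2 * q^2) + 6 * q * (n * q) + 4 * q * (1 - 2 * p) * 0 + q * (1 - 3 * q)"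
    using p Suc binomial_centered_mean[OF p, of n] binomial_centered_second_moment[OF p, of n]
    by (simp add: q_def)
  also have "\<dots> = real (Suc n) * q * (1 - 6 * q) + 3 * (real (Suc n))^2 * q^2"
    by (simp add: power2_eq_square algebra_simps)
  finally show ?case .
qed

section \<open>Anticoncentration from the fourth moment\<close>

lemma quartic_le_indicator_neg:
  fixes z :: real
  shows "3 * z^2 / 64 - z^4 / 432 - z / 8 \<le> (if z < 0 then 1 else 0)"
proof (cases "z < 0")
  case True
  have "0 < 15 * z^2 + 216 * z + 1152"
  proof -
    have "0 \<le> 15 * (z + 36/5)^2" by simp
    then show ?thesis by (simp add: power2_eq_square algebra_simps)
  qed
  moreover have "0 \<le> 4 * (z^2 - 12)^2" by simp
  ultimately have "0 \<le> 4 * z^4 - 81 * z^2 + 216 * z + 1728"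
    using True by (simp add: power2_eq_square power4_eq_xxxx algebra_simps)
  then show ?thesis
    using True by (simp add: power2_eq_square power4_eq_xxxx algebra_simps)
next
  case False
  have "0 \<le> (z - 13/5)^2 * (4 * z + 104/5)" using False by simp
  then have "0 \<le> 4 * z^3 - 81 * z + 216"
    using False by (simp add: power2_eq_square power3_eq_cube algebra_simps)
  then have "0 \<le> z * (4 * z^3 - 81 * z + 216)"
    using False by simp
  then show ?thesis
    using False by (simp add: power2_eq_square power3_eq_cube power4_eq_xxxx algebra_simps)
qed

text \<open>With \<open>\<sigma>\<^sup>2 = E X\<^sup>2\<close>, integrating the quartic minorant above at \<open>X/\<sigma>\<close> gives
  \<open>P(X < 0) \<ge> 3/64 - E X\<^sup>4/(432 \<sigma>\<^sup>4) \<ge> 3/64 - 1/108 > 1/30\<close>.\<close>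

lemma prob_negative_ge_of_fourth_moment:
  fixes M :: "'a pmf" and X :: "'a \<Rightarrow> real"
  assumes int: "integrable M X" "integrable M (\<lambda>x. X x ^ 2)" "integrable M (\<lambda>x. X x ^ 4)"
    and mean: "measure_pmf.expectation M X = 0"
    and var_pos: "0 < measure_pmf.expectation M (\<lambda>x. X x ^ 2)"
    and fourth: "measure_pmf.expectation M (\<lambda>x. X x ^ 4)
                   \<le> 4 * (measure_pmf.expectation M (\<lambda>x. X x ^ 2))^2"
  shows "1/30 \<le> measure_pmf.prob M {x. X x < 0}"
proof -
  let ?E = "measure_pmf.expectation M"
  define v where "v = ?E (\<lambda>x. X x ^ 2)"
  define s where "s = sqrt v"
  have s_pos: "0 < s" and s2: "s^2 = v"
    using var_pos by (simp_all add: s_def v_def)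
  have s4: "s^4 = v^2"
    using s2 by (metis power_mult num_double numeral_times_numeral)
  have "?E (\<lambda>x. 3 * (X x / s)^2 / 64 - (X x / s)^4 / 432 - (X x / s) / 8)
      = 3 / (64 * s^2) * v - 1 / (432 * s^4) * ?E (\<lambda>x. X x ^ 4) - 1 / (8 * s) * ?E X"
    using int by (simp add: v_def power_divide field_simps)
  also have "\<dots> = 3 / 64 - ?E (\<lambda>x. X x ^ 4) / (432 * v^2)"
    using s_pos s2 s4 var_pos mean by (simp add: v_def)
  also have "\<dots> \<ge> 3 / 64 - 4 * v^2 / (432 * v^2)"
    using fourth var_pos unfolding v_def by (intro diff_left_mono divide_right_mono) auto
  finally have "3 / 64 - 1 / 108 \<le> ?E (\<lambda>x. 3 * (X x / s)^2 / 64 - (X x / s)^4 / 432 - (X x / s) / 8)"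
    using var_pos by (simp add: v_def)
  also have "\<dots> \<le> ?E (indicator {x. X x < 0})"
  proof (rule integral_mono)
    show "integrable M (\<lambda>x. 3 * (X x / s)^2 / 64 - (X x / s)^4 / 432 - (X x / s) / 8)"
      using int by (simp add: power_divide)
    fix x
    have "X x / s < 0 \<longleftrightarrow> X x < 0"
      using s_pos by (simp add: divide_less_0_iff)
    then show "3 * (X x / s)^2 / 64 - (X x / s)^4 / 432 - (X x / s) / 8 \<le> indicator {x. X x < 0} x"
      using quartic_le_indicator_neg[of "X x / s"] by (simp add: indicator_def split: if_splits)
  qed (simp_all add: measure_pmf.emeasure_eq_measure)
  finally show ?thesis by simp
qed

lemma binomial_anticoncentration:
  fixes p :: real
  assumes p: "p \<in> {0..1}" and var: "1 \<le> n * (p * (1 - p))"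
  shows "1/30 \<le> measure_pmf.prob (binomial_pmf n p) {k. real k < n * p}"
    and "1/30 \<le> measure_pmf.prob (binomial_pmf n p) {k. n * p < real k}"
proof -
  let ?E = "measure_pmf.expectation (binomial_pmf n p)"
  define v where "v = n * (p * (1 - p))"
  have second: "?E (\<lambda>k. (real k - n * p)^2) = v"
    using binomial_centered_second_moment[OF p] by (simp add: v_def)
  have "?E (\<lambda>k. (real k - n * p)^4) = v * (1 - 6 * (p * (1 - p))) + 3 * v^2"
    using binomial_centered_fourth_moment[OF p, of n] by (simp add: v_def power_mult_distrib)
  also have "\<dots> \<le> 4 * v^2"
  proof -
    have "v * (1 - 6 * (p * (1 - p))) \<le> v"
      using p var by (simp add: v_def mult_left_le)
    moreover have "v \<le> v^2"
      using mult_left_mono[of 1 v v] var by (simp add: v_def power2_eq_square)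
    ultimately show ?thesis by linarith
  qed
  finally have fourth: "?E (\<lambda>k. (real k - n * p)^4) \<le> 4 * v^2" .
  show "1/30 \<le> measure_pmf.prob (binomial_pmf n p) {k. real k < n * p}"
    using prob_negative_ge_of_fourth_moment[of "binomial_pmf n p" "\<lambda>k. real k - n * p"]
      p var second fourth binomial_centered_mean[OF p] by (simp add: v_def)
  have "(n * p - real k)^j = (real k - n * p)^j" if "even j" for k j
    using that by (metis minus_diff_eq power_minus_even)
  then show "1/30 \<le> measure_pmf.prob (binomial_pmf n p) {k. n * p < real k}"
    using prob_negative_ge_of_fourth_moment[of "binomial_pmf n p" "\<lambda>k. n * p - real k"]
      p var second fourth binomial_centered_mean[OF p] by (simp add: v_def)
qed

lemma eventually_binomial_anticoncentration:
  fixes p :: real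
  assumes "0 < p" "p < 1"
  shows "eventually (\<lambda>n. 1/30 \<le> measure_pmf.prob (binomial_pmf n p) {k. real k < n * p}
                        \<and> 1/30 \<le> measure_pmf.prob (binomial_pmf n p) {k. n * p < real k}) sequentially"
proof -
  have q: "0 < p * (1 - p)"
    using assms by simp
  have "eventually (\<lambda>n. 1 / (p * (1 - p)) \<le> real n) sequentially"
    using filterlim_real_sequentially by (simp add: filterlim_at_top)
  then show ?thesis
  proof eventually_elim
    case (elim n)
    then have "1 \<le> n * (p * (1 - p))"
      using q by (simp add: field_simps)
    then show ?case
      using assms binomial_anticoncentration[of p n] by simp
  qed
qed

lemma eventually_binomial_prob_below_ge:
  fixes p t :: real
  assumes "0 \<le> p" "p \<le> t" "0 < t" "t < 1"
  shows "eventually (\<lambda>n. 1/30 \<le> measure_pmf.prob (binomial_pmf n p) {k. real k < t * n}) sequentially"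
proof (cases "p = 0")
  case True
  have certain: "measure_pmf.prob (binomial_pmf n p) {k. real k < t * n} = 1" if "0 < n" for n
    using True that \<open>0 < t\<close> by (subst measure_pmf.prob_eq_1) (auto simp: AE_measure_pmf_iff)
  have "eventually (\<lambda>n. 0 < n) sequentially"
    by (rule eventually_gt_at_top)
  then show ?thesis
    by eventually_elim (simp add: certain)
next
  case False
  then have "0 < p" "p < 1"
    using assms by auto
  from eventually_binomial_anticoncentration[OF this] show ?thesis
  proof (rule eventually_mono)
    fix n :: nat
    have "{k. real k < n * p} \<subseteq> {k. real k < t * n}"
      using mult_left_mono[OF \<open>p \<le> t\<close>, of n] by (auto simp: mult.commute)
    then have "measure_pmf.prob (binomial_pmf n p) {k. real k < n * p}
               \<le> measure_pmf.prob (binomial_pmf n p) {k. real k < t * n}"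
      by (rule measure_pmf.finite_measure_mono) simp
    then show "1/30 \<le> measure_pmf.prob (binomial_pmf n p) {k. real k < t * n}"
      if "1/30 \<le> measure_pmf.prob (binomial_pmf n p) {k. real k < n * p}
          \<and> 1/30 \<le> measure_pmf.prob (binomial_pmf n p) {k. n * p < real k}"
      using that by linarith
  qed
qed

lemma eventually_binomial_prob_above_ge:
  fixes p t :: real
  assumes "t \<le> p" "p \<le> 1" "0 < t" "t < 1"
  shows "eventually (\<lambda>n. 1/30 \<le> measure_pmf.prob (binomial_pmf n p) {k. t * n \<le> real k}) sequentially"
proof (cases "p = 1")
  case True
  have "measure_pmf.prob (binomial_pmf n p) {k. t * n \<le> real k} = 1" for n
    using True \<open>t < 1\<close> mult_right_mono[of t 1 "real n"]
    by (subst measure_pmf.prob_eq_1) (auto simp: AE_measure_pmf_iff)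
  then show ?thesis
    by simp
next
  case False
  then have "0 < p" "p < 1"
    using assms by auto
  from eventually_binomial_anticoncentration[OF this] show ?thesis
  proof (rule eventually_mono)
    fix n :: nat
    have "{k. n * p < real k} \<subseteq> {k. t * n \<le> real k}"
      using mult_left_mono[OF \<open>t \<le> p\<close>, of n] by (auto simp: mult.commute)
    then have "measure_pmf.prob (binomial_pmf n p) {k. n * p < real k}
               \<le> measure_pmf.prob (binomial_pmf n p) {k. t * n \<le> real k}"
      by (rule measure_pmf.finite_measure_mono) simp
    then show "1/30 \<le> measure_pmf.prob (binomial_pmf n p) {k. t * n \<le> real k}"
      if "1/30 \<le> measure_pmf.prob (binomial_pmf n p) {k. real k < n * p}
          \<and> 1/30 \<le> measure_pmf.prob (binomial_pmf n p) {k. n * p < real k}"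
      using that by linarith
  qed
qed

section \<open>Hoeffding tails and weighted averages\<close>

lemma binomial_prob_below_le_exp:
  fixes p t \<epsilon> :: real
  assumes p: "p \<in> {0..1}" and n: "0 < n" and \<epsilon>: "0 \<le> \<epsilon>" "t + \<epsilon> \<le> p"
  shows "measure_pmf.prob (binomial_pmf n p) {k. real k < t * n} \<le> exp (- 2 * real n * \<epsilon>^2)"
proof -
  have "t * n + \<epsilon> * n \<le> p * n"
    using mult_right_mono[OF \<epsilon>(2), of "real n"] by (simp add: distrib_right)
  then have "{k. real k < t * n} \<subseteq> {k. real k / n \<le> p - \<epsilon>}"
    using n by (auto simp: field_simps)
  then have "measure_pmf.prob (binomial_pmf n p) {k. real k < t * n}
               \<le> measure_pmf.prob (binomial_pmf n p) {k. real k / n \<le> p - \<epsilon>}"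
    by (rule measure_pmf.finite_measure_mono) simp
  also have "\<dots> \<le> exp (- 2 * real n * \<epsilon>^2)"
    using binomial_distribution.prob_le'[OF _ n \<epsilon>(1)] p by (simp add: binomial_distribution_def)
  finally show ?thesis .
qed

lemma binomial_prob_above_le_exp:
  fixes p t \<epsilon> :: real
  assumes p: "p \<in> {0..1}" and n: "0 < n" and \<epsilon>: "0 \<le> \<epsilon>" "p + \<epsilon> \<le> t"
  shows "measure_pmf.prob (binomial_pmf n p) {k. t * n \<le> real k} \<le> exp (- 2 * real n * \<epsilon>^2)"
proof -
  have "p * n + \<epsilon> * n \<le> t * n"
    using mult_right_mono[OF \<epsilon>(2), of "real n"] by (simp add: distrib_right)
  then have "{k. t * n \<le> real k} \<subseteq> {k. p + \<epsilon> \<le> real k / n}"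
    using n by (auto simp: field_simps)
  then have "measure_pmf.prob (binomial_pmf n p) {k. t * n \<le> real k}
               \<le> measure_pmf.prob (binomial_pmf n p) {k. p + \<epsilon> \<le> real k / n}"
    by (rule measure_pmf.finite_measure_mono) simp
  also have "\<dots> \<le> exp (- 2 * real n * \<epsilon>^2)"
    using binomial_distribution.prob_ge'[OF _ n \<epsilon>(1)] p by (simp add: binomial_distribution_def)
  finally show ?thesis .
qed

lemma weighted_sum_ge:
  fixes x q :: "'a \<Rightarrow> real"
  assumes "sum q A = 1" "\<And>a. a \<in> A \<Longrightarrow> 0 \<le> q a" "\<And>a. a \<in> A \<Longrightarrow> c \<le> x a"
  shows "c \<le> (\<Sum>a\<in>A. q a * x a)"
proof -
  have "c = (\<Sum>a\<in>A. q a * c)"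
    using assms(1) by (simp flip: sum_distrib_right)
  also have "\<dots> \<le> (\<Sum>a\<in>A. q a * x a)"
    using assms(2,3) by (intro sum_mono mult_left_mono)
  finally show ?thesis .
qed

lemma weighted_sum_le_one_minus:
  fixes x q :: "'a \<Rightarrow> real"
  assumes "finite A" "sum q A = 1" "\<And>a. a \<in> A \<Longrightarrow> 0 \<le> q a" "\<And>a. a \<in> A \<Longrightarrow> x a \<le> 1"
    and "a0 \<in> A" "x a0 \<le> 1 - c"
  shows "(\<Sum>a\<in>A. q a * x a) \<le> 1 - q a0 * c"
proof -
  have "(\<Sum>a\<in>A. q a * x a) \<le> (\<Sum>a\<in>A. q a - (if a = a0 then q a0 * c else 0))"
  proof (rule sum_mono)
    fix a assume "a \<in> A"
    then show "q a * x a \<le> q a - (if a = a0 then q a0 * c else 0)"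
      using assms(3,4,6) mult_left_mono[of "x a" "1 - c" "q a"] mult_left_mono[of "x a" 1 "q a"]
      by (auto simp: algebra_simps)
  qed
  also have "\<dots> = 1 - q a0 * c"
    using assms(1,2,5) by (simp add: sum_subtractf)
  finally show ?thesis .
qed

lemma eventually_sequentially_ex_real_threshold:
  assumes "eventually P sequentially"
  shows "\<exists>N0 :: real. 0 < N0 \<and> (\<forall>N. N0 < real N \<longrightarrow> P N)"
proof -
  obtain N1 where "\<And>N. N1 \<le> N \<Longrightarrow> P N"
    using assms by (auto simp: eventually_sequentially)
  then show ?thesis
    by (intro exI[of _ "real N1 + 1"]) auto
qed

section \<open>The voting game\<close>

definition informed_win_prob ::
  "(nat \<Rightarrow> nat \<Rightarrow> real) \<Rightarrow> nat \<Rightarrow> (nat \<Rightarrow> real) \<Rightarrow> real \<Rightarrow> (nat \<Rightarrow> real)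
     \<Rightarrow> nat \<Rightarrow> nat \<Rightarrow> real" where
  "informed_win_prob P M beta mu alphaA N w =
     (if mu < alphaA w then lambdaA P M beta mu N w else lambdaR P M beta mu N w)"

text \<open>On \<open>Hset\<close> this is \<open>fA\<close> and on \<open>Lset\<close> it is \<open>fR\<close> (given \<open>\<Sum>m = 1..M. P m w = 1\<close>),
  so \<open>fmin\<close> is its minimum over all states.\<close>

definition informed_margin ::
  "(nat \<Rightarrow> nat \<Rightarrow> real) \<Rightarrow> nat \<Rightarrow> (nat \<Rightarrow> real) \<Rightarrow> real \<Rightarrow> (nat \<Rightarrow> real)
     \<Rightarrow> nat \<Rightarrow> real" where
  "informed_margin P M beta mu alphaA w =
     (if mu < alphaA w then voteA_prob P M beta w - mu else mu - voteA_prob P M beta w)"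

lemma lambdaR_eq_1_minus_lambdaA: "lambdaR P M beta mu N w = 1 - lambdaA P M beta mu N w"
proof -
  have below: "{k. real k < mu * real N}
          = space (binomial_pmf N (voteA_prob P M beta w)) - {k. mu * real N \<le> real k}"
    by auto
  show ?thesis
    unfolding lambdaR_def lambdaA_def below by (rule measure_pmf.prob_compl) simp
qed

lemma informed_win_prob_le_1: "informed_win_prob P M beta mu alphaA N w \<le> 1"
  by (simp add: informed_win_prob_def lambdaA_def lambdaR_def)

lemma fidelity_eq_sum_informed_win_prob:
  assumes "\<forall>w \<in> {1..W}. alphaA w \<noteq> mu"
  shows "fidelity W Pw P M beta mu alphaA N
           = (\<Sum>w = 1..W. Pw w * informed_win_prob P M beta mu alphaA N w)"
proof -
  let ?L = "Lset W alphaA mu" and ?H = "Hset W alphaA mu"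
  have LH: "{1..W} = ?L \<union> ?H" "?L \<inter> ?H = {}"
    using assms by (auto simp: Lset_def Hset_def)
  have fin: "finite ?L" "finite ?H"
    by (simp_all add: Lset_def Hset_def)
  have "(\<Sum>w = 1..W. Pw w * informed_win_prob P M beta mu alphaA N w)
      = (\<Sum>w\<in>?L. Pw w * informed_win_prob P M beta mu alphaA N w)
        + (\<Sum>w\<in>?H. Pw w * informed_win_prob P M beta mu alphaA N w)"
    unfolding LH(1) by (rule sum.union_disjoint[OF fin LH(2)])
  also have "\<dots> = fidelity W Pw P M beta mu alphaA N"
    unfolding fidelity_def informed_win_prob_def by (simp add: Lset_def Hset_def)
  finally show ?thesis ..
qed

lemma voteA_prob_bounds:
  assumes "\<forall>m \<in> {1..M}. 0 \<le> P m w" "(\<Sum>m = 1..M. P m w) = 1"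
    and "\<forall>m \<in> {1..M}. 0 \<le> beta m \<and> beta m \<le> 1"
  shows "voteA_prob P M beta w \<in> {0..1}"
proof -
  have "0 \<le> voteA_prob P M beta w"
    unfolding voteA_prob_def using assms(1,3) by (intro sum_nonneg) simp
  moreover have "voteA_prob P M beta w \<le> (\<Sum>m = 1..M. P m w)"
    unfolding voteA_prob_def using assms(1,3) by (intro sum_mono) (simp add: mult_left_le)
  ultimately show ?thesis
    using assms(2) by simp
qed

lemma fmin_le_informed_margin:
  assumes "w \<in> {1..W}" "alphaA w \<noteq> mu" "(\<Sum>m = 1..M. P m w) = 1"
  shows "fmin W P M beta mu alphaA \<le> informed_margin P M beta mu alphaA w"
proof (cases "mu < alphaA w")
  case True
  then have "w \<in> Hset W alphaA mu"
    using assms(1) by (simp add: Hset_def)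
  then have "Min (fA P M beta mu ` Hset W alphaA mu) \<le> fA P M beta mu w"
    by (simp add: Hset_def)
  then show ?thesis
    using True by (simp add: fmin_def informed_margin_def fA_def voteA_prob_def)
next
  case False
  then have "w \<in> Lset W alphaA mu"
    using assms(1,2) by (simp add: Lset_def)
  then have "Min (fR P M beta mu ` Lset W alphaA mu) \<le> fR P M beta mu w"
    by (simp add: Lset_def)
  moreover have "fR P M beta mu w = mu - voteA_prob P M beta w"
    using assms(3) by (simp add: fR_def voteA_prob_def right_diff_distrib sum_subtractf)
  ultimately show ?thesis
    using False by (simp add: fmin_def informed_margin_def)
qed

lemma fmin_nonpos_imp_nonpos_informed_margin:
  assumes "fmin W P M beta mu alphaA \<le> 0" "Lset W alphaA mu \<noteq> {}" "Hset W alphaA mu \<noteq> {}"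
    and "\<forall>w \<in> {1..W}. (\<Sum>m = 1..M. P m w) = 1"
  shows "\<exists>w \<in> {1..W}. informed_margin P M beta mu alphaA w \<le> 0"
proof (cases "Min (fA P M beta mu ` Hset W alphaA mu) \<le> 0")
  case True
  have "Min (fA P M beta mu ` Hset W alphaA mu) \<in> fA P M beta mu ` Hset W alphaA mu"
    using assms(3) by (intro Min_in) (simp_all add: Hset_def)
  then obtain w where "w \<in> Hset W alphaA mu" "fA P M beta mu w = Min (fA P M beta mu ` Hset W alphaA mu)"
    by (metis imageE)
  then show ?thesis
    using True by (intro bexI[of _ w]) (auto simp: Hset_def informed_margin_def fA_def voteA_prob_def)
next
  case False
  then have "Min (fR P M beta mu ` Lset W alphaA mu) \<le> 0"
    using assms(1) by (simp add: fmin_def)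
  moreover have "Min (fR P M beta mu ` Lset W alphaA mu) \<in> fR P M beta mu ` Lset W alphaA mu"
    using assms(2) by (intro Min_in) (simp_all add: Lset_def)
  then obtain w where w: "w \<in> Lset W alphaA mu"
    "fR P M beta mu w = Min (fR P M beta mu ` Lset W alphaA mu)"
    by (metis imageE)
  moreover have "fR P M beta mu w = mu - voteA_prob P M beta w"
    using w(1) assms(4) by (simp add: Lset_def fR_def voteA_prob_def right_diff_distrib sum_subtractf)
  ultimately show ?thesis
    using w by (intro bexI[of _ w]) (auto simp: Lset_def informed_margin_def)
qed

lemma informed_win_prob_ge_of_margin:
  assumes p: "voteA_prob P M beta w \<in> {0..1}" and N: "0 < N"
    and f: "0 \<le> f" "f \<le> informed_margin P M beta mu alphaA w"
  shows "1 - exp (- 2 * real N * f^2) \<le> informed_win_prob P M beta mu alphaA N w"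
proof (cases "mu < alphaA w")
  case True
  have "lambdaR P M beta mu N w \<le> exp (- 2 * real N * f^2)"
    unfolding lambdaR_def
    by (rule binomial_prob_below_le_exp[OF p N f(1)]) (use True f(2) in \<open>simp add: informed_margin_def\<close>)
  then show ?thesis
    using True by (simp add: informed_win_prob_def lambdaR_eq_1_minus_lambdaA)
next
  case False
  have "lambdaA P M beta mu N w \<le> exp (- 2 * real N * f^2)"
    unfolding lambdaA_def
    by (rule binomial_prob_above_le_exp[OF p N f(1)]) (use False f(2) in \<open>simp add: informed_margin_def\<close>)
  then show ?thesis
    using False by (simp add: informed_win_prob_def lambdaR_eq_1_minus_lambdaA)
qed

lemma eventually_informed_win_prob_le:
  assumes p: "voteA_prob P M beta w \<in> {0..1}" and mu: "0 < mu" "mu < 1"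
    and margin: "informed_margin P M beta mu alphaA w \<le> 0"
  shows "eventually (\<lambda>N. informed_win_prob P M beta mu alphaA N w \<le> 1 - 1/30) sequentially"
proof (cases "mu < alphaA w")
  case True
  then have "eventually (\<lambda>N. 1/30 \<le> lambdaR P M beta mu N w) sequentially"
    unfolding lambdaR_def
    using eventually_binomial_prob_below_ge[of "voteA_prob P M beta w" mu] p mu margin
    by (simp add: informed_margin_def)
  then show ?thesis
    using True by (simp add: informed_win_prob_def lambdaR_eq_1_minus_lambdaA)
next
  case False
  then have "eventually (\<lambda>N. 1/30 \<le> lambdaA P M beta mu N w) sequentially"
    unfolding lambdaA_def
    using eventually_binomial_prob_above_ge[of mu "voteA_prob P M beta w"] p mu margin
    by (simp add: informed_margin_def)
  then show ?thesis
    using False by (simp add: informed_win_prob_def lambdaR_eq_1_minus_lambdaA)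
qed

lemma fidelity_ge_Hoeffding:
  assumes prior: "\<forall>w \<in> {1..W}. 0 \<le> Pw w" "(\<Sum>w = 1..W. Pw w) = 1"
    and p01: "\<forall>w \<in> {1..W}. voteA_prob P M beta w \<in> {0..1}"
    and sig_sum: "\<forall>w \<in> {1..W}. (\<Sum>m = 1..M. P m w) = 1"
    and alpha_ne_mu: "\<forall>w \<in> {1..W}. alphaA w \<noteq> mu"
    and f: "0 \<le> fmin W P M beta mu alphaA" and N: "0 < N"
  shows "1 - exp (- 2 * real N * (fmin W P M beta mu alphaA)^2)
           \<le> fidelity W Pw P M beta mu alphaA N"
proof -
  have "1 - exp (- 2 * real N * (fmin W P M beta mu alphaA)^2)
          \<le> informed_win_prob P M beta mu alphaA N w" if w: "w \<in> {1..W}" for w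
    using informed_win_prob_ge_of_margin[OF _ N f] fmin_le_informed_margin[OF w]
      w p01 sig_sum alpha_ne_mu
    by blast
  then show ?thesis
    using weighted_sum_ge[of Pw "{1..W}"] prior alpha_ne_mu
    by (simp add: fidelity_eq_sum_informed_win_prob)
qed

lemma eventually_fidelity_le:
  assumes prior: "\<forall>w \<in> {1..W}. 0 < Pw w" "(\<Sum>w = 1..W. Pw w) = 1"
    and p01: "\<forall>w \<in> {1..W}. voteA_prob P M beta w \<in> {0..1}"
    and sig_sum: "\<forall>w \<in> {1..W}. (\<Sum>m = 1..M. P m w) = 1"
    and mu: "0 < mu" "mu < 1" and alpha_ne_mu: "\<forall>w \<in> {1..W}. alphaA w \<noteq> mu"
    and LH: "Lset W alphaA mu \<noteq> {}" "Hset W alphaA mu \<noteq> {}"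
    and f: "fmin W P M beta mu alphaA \<le> 0"
  shows "\<exists>eta > 0. eventually (\<lambda>N. fidelity W Pw P M beta mu alphaA N \<le> 1 - eta) sequentially"
proof -
  have weights: "\<And>w. w \<in> {1..W} \<Longrightarrow> 0 \<le> Pw w"
    using prior(1) by (simp add: less_imp_le)
  obtain w0 where w0: "w0 \<in> {1..W}" "informed_margin P M beta mu alphaA w0 \<le> 0"
    using fmin_nonpos_imp_nonpos_informed_margin[OF f LH sig_sum] by blast
  have "eventually (\<lambda>N. informed_win_prob P M beta mu alphaA N w0 \<le> 1 - 1/30) sequentially"
    using eventually_informed_win_prob_le[OF _ mu w0(2)] w0(1) p01 by blast
  then have "eventually (\<lambda>N. fidelity W Pw P M beta mu alphaA N \<le> 1 - Pw w0 * (1/30)) sequentially"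
  proof eventually_elim
    case (elim N)
    then show ?case
      using weighted_sum_le_one_minus[of "{1..W}" Pw "informed_win_prob P M beta mu alphaA N"
          w0 "1/30"] weights prior(2) w0(1) alpha_ne_mu
      by (simp add: fidelity_eq_sum_informed_win_prob informed_win_prob_le_1)
  qed
  moreover have "0 < Pw w0 * (1/30)"
    using prior w0(1) by simp
  ultimately show ?thesis
    by blast
qed

theorem corollary6:
  fixes W M :: nat and Pw :: "nat \<Rightarrow> real" and P :: "nat \<Rightarrow> nat \<Rightarrow> real"
    and beta :: "nat \<Rightarrow> real" and mu :: real and alphaA :: "nat \<Rightarrow> real"
  assumes M_pos: "1 \<le> M"
    and prior_pos: "\<forall>w \<in> {1..W}. Pw w > 0"
    and prior_sum: "(\<Sum>w = 1..W. Pw w) = 1"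
    and sig_nonneg: "\<forall>w \<in> {1..W}. \<forall>m \<in> {1..M}. P m w \<ge> 0"
    and sig_sum: "\<forall>w \<in> {1..W}. (\<Sum>m = 1..M. P m w) = 1"
    and sd: "stoch_dom W M P"
    and mu: "0 < mu" "mu < 1"
    and alpha_range: "\<forall>w \<in> {1..W}. 0 \<le> alphaA w \<and> alphaA w \<le> 1"
    and alpha_mono: "\<forall>w w'. 1 \<le> w \<longrightarrow> w \<le> w' \<longrightarrow> w' \<le> W \<longrightarrow> alphaA w \<le> alphaA w'"
    and alpha_ne_mu: "\<forall>w \<in> {1..W}. alphaA w \<noteq> mu"
    and L_ne: "Lset W alphaA mu \<noteq> {}"
    and H_ne: "Hset W alphaA mu \<noteq> {}"
    and beta_range: "\<forall>m \<in> {1..M}. 0 \<le> beta m \<and> beta m \<le> 1"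
  shows "(fmin W P M beta mu alphaA > 0 \<longrightarrow>
            (\<exists>N0 :: real. N0 > 0 \<and> (\<forall>N :: nat. real N > N0 \<longrightarrow>
               fidelity W Pw P M beta mu alphaA N
                 \<ge> 1 - 2 * exp (- (1/2) * (fmin W P M beta mu alphaA)\<^sup>2 * real N))))
       \<and> (fmin W P M beta mu alphaA \<le> 0 \<longrightarrow>
            (\<exists>N0 :: real. \<exists>eta :: real. N0 > 0 \<and> eta > 0 \<and> (\<forall>N :: nat. real N > N0 \<longrightarrow>
               fidelity W Pw P M beta mu alphaA N \<le> 1 - eta)))"
proof -
  let ?f = "fmin W P M beta mu alphaA"
  let ?fid = "fidelity W Pw P M beta mu alphaA"
  have p01: "\<forall>w \<in> {1..W}. voteA_prob P M beta w \<in> {0..1}"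
    by (intro ballI voteA_prob_bounds) (use sig_nonneg sig_sum beta_range in auto)
  have lower: "1 - 2 * exp (- (1/2) * ?f\<^sup>2 * real N) \<le> ?fid N" if "0 < ?f" "0 < N" for N
  proof -
    have "1 - exp (- 2 * real N * ?f\<^sup>2) \<le> ?fid N"
      using fidelity_ge_Hoeffding[OF _ prior_sum p01 sig_sum alpha_ne_mu] prior_pos that
      by (simp add: less_imp_le)
    moreover have "exp (- 2 * real N * ?f\<^sup>2) \<le> exp (- (1/2) * ?f\<^sup>2 * real N)"
      by simp
    ultimately show ?thesis
      using exp_gt_zero[of "- (1/2) * ?f\<^sup>2 * real N"] by linarith
  qed
  have upper: "\<exists>N0 eta. 0 < N0 \<and> 0 < eta \<and> (\<forall>N. N0 < real N \<longrightarrow> ?fid N \<le> 1 - eta)"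
    if "?f \<le> 0"
    using eventually_fidelity_le[OF prior_pos prior_sum p01 sig_sum mu alpha_ne_mu L_ne H_ne that]
    by (blast dest: eventually_sequentially_ex_real_threshold)
  show ?thesis
    using lower upper by (auto intro!: exI[of _ "1/2"])
qed

end
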